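(* For $n=3$: $\mathbb{O}_{3,0}\simeq\mathbb{O}_{2,1}\simeq\mathbb{O}_{1,2}$, and $\mathbb{O}_{0,3}$ is not isomorphic to any of them by an isomorphism preserving the structure of $\mathbb{Z}_2^3$-graded algebra.
   Context: $\mathbb{Z}_2=\{0,1\}$. For $p+q=n\ge3$, $\mathbb{O}_{p,q}$ is the real algebra with basis $\{u_x: x\in\mathbb{Z}_2^n\}$ and product $u_x\cdot u_y=(-1)^{f(x,y)}u_{x+y}$, where $f(x,y)=\sum_{1\le i<j<k\le n}(x_ix_jy_k+x_iy_jx_k+y_ix_jx_k)+\sum_{1\le i\le j\le n}x_iy_j+\sum_{1\le i\le p}x_iy_i$. Homogeneous elements are scalar multiples of some $u_x$; an isomorphism preserving the graded structure is an algebra isomorphism sending homogeneous elements to homogeneous elements. *)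

theory Defs
  imports "HOL-Analysis.Analysis"
begin

text \<open>Elements of Z_2^n are boolean lists of length n (index i-1 stands for coordinate i);
  addition in Z_2 is exclusive or.\<close>

definition grades :: "nat \<Rightarrow> bool list set" where
  "grades n = {x. length x = n}"

definition gadd :: "bool list \<Rightarrow> bool list \<Rightarrow> bool list" where
  "gadd x y = map2 (\<noteq>) x y"

text \<open>The exponent f(x,y) (as a natural number; only its parity matters).\<close>

definition octf :: "nat \<Rightarrow> nat \<Rightarrow> bool list \<Rightarrow> bool list \<Rightarrow> nat" where
  "octf p n x y =
     (\<Sum>i<n. \<Sum>j<n. \<Sum>k<n. if i < j \<and> j < k then
        of_bool (x!i \<and> x!j \<and> y!k) + of_bool (x!i \<and> y!j \<and> x!k) + of_bool (y!i \<and> x!j \<and> x!k)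
      else 0)
   + (\<Sum>i<n. \<Sum>j<n. if i \<le> j then of_bool (x!i \<and> y!j) else 0)
   + (\<Sum>i<p. of_bool (x!i \<and> y!i))"

text \<open>The underlying vector space of O_{p,q}: real coefficient functions on Z_2^(p+q),
  zero outside Z_2^(p+q).\<close>

definition ocarrier :: "nat \<Rightarrow> nat \<Rightarrow> (bool list \<Rightarrow> real) set" where
  "ocarrier p q = {a. \<forall>z. z \<notin> grades (p+q) \<longrightarrow> a z = 0}"

definition ubasis :: "bool list \<Rightarrow> bool list \<Rightarrow> real" where
  "ubasis x = (\<lambda>z. if z = x then 1 else 0)"

text \<open>Bilinear extension of u_x u_y = (-1)^f(x,y) u_{x+y}.\<close>

definition omult :: "nat \<Rightarrow> nat \<Rightarrow> (bool list \<Rightarrow> real) \<Rightarrow> (bool list \<Rightarrow> real) \<Rightarrow> (bool list \<Rightarrow> real)" where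
  "omult p q a b = (\<lambda>z. \<Sum>x\<in>grades (p+q). \<Sum>y\<in>grades (p+q).
      if gadd x y = z then (-1) ^ octf p (p+q) x y * a x * b y else 0)"

definition homogeneous :: "nat \<Rightarrow> nat \<Rightarrow> (bool list \<Rightarrow> real) \<Rightarrow> bool" where
  "homogeneous p q a \<longleftrightarrow> (\<exists>x\<in>grades (p+q). \<exists>c::real. a = (\<lambda>z. c * ubasis x z))"

definition graded_iso_map :: "nat \<Rightarrow> nat \<Rightarrow> nat \<Rightarrow> nat \<Rightarrow>
    ((bool list \<Rightarrow> real) \<Rightarrow> (bool list \<Rightarrow> real)) \<Rightarrow> bool" where
  "graded_iso_map p q p' q' \<phi> \<longleftrightarrow>
     bij_betw \<phi> (ocarrier p q) (ocarrier p' q') \<and>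
     (\<forall>a\<in>ocarrier p q. \<forall>b\<in>ocarrier p q. \<phi> (\<lambda>z. a z + b z) = (\<lambda>z. \<phi> a z + \<phi> b z)) \<and>
     (\<forall>a\<in>ocarrier p q. \<forall>c::real. \<phi> (\<lambda>z. c * a z) = (\<lambda>z. c * \<phi> a z)) \<and>
     (\<forall>a\<in>ocarrier p q. \<forall>b\<in>ocarrier p q. \<phi> (omult p q a b) = omult p' q' (\<phi> a) (\<phi> b)) \<and>
     (\<forall>a\<in>ocarrier p q. homogeneous p q a \<longrightarrow> homogeneous p' q' (\<phi> a))"

definition graded_isomorphic :: "nat \<Rightarrow> nat \<Rightarrow> nat \<Rightarrow> nat \<Rightarrow> bool" where
  "graded_isomorphic p q p' q' \<longleftrightarrow> (\<exists>\<phi>. graded_iso_map p q p' q' \<phi>)"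

end

theory Submission
  imports Defs
begin

text \<open>The isomorphisms O_{3,0} \<cong> O_{2,1} \<cong> O_{1,2} are signed relabellings of the basis by a
  linear automorphism \<tau> of Z_2^3 that transforms one twisting function f into the other up to the
  coboundary of a sign function. The algebra O_{0,3} is the octonion algebra: the only elements
  squaring to 1 are \<plusminus>1, whereas in O_{3,0}, O_{2,1} and O_{1,2} some basis element u_y with
  y \<noteq> 0 squares to 1. An algebra isomorphism preserves the unit, hence square roots of the unit.\<close>

lemma finite_grades: "finite (grades n)"
  using finite_lists_length_eq[of "UNIV :: bool set" n] by (simp add: grades_def)

lemma length_gadd [simp]: "length (gadd x y) = min (length x) (length y)"
  by (simp add: gadd_def)

lemma gadd_in_grades: "x \<in> grades n \<Longrightarrow> y \<in> grades n \<Longrightarrow> gadd x y \<in> grades n"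
  by (simp add: grades_def)

lemma gadd_commute: "gadd x y = gadd y x"
  by (rule nth_equalityI) (auto simp: gadd_def)

lemma gadd_gadd_cancel: "length x = length y \<Longrightarrow> gadd x (gadd x y) = y"
  by (rule nth_equalityI) (auto simp: gadd_def)

lemma gadd_eq_iff:
  assumes "x \<in> grades n" "y \<in> grades n" "w \<in> grades n"
  shows "gadd x y = w \<longleftrightarrow> y = gadd x w"
  using assms gadd_gadd_cancel[of x y] gadd_gadd_cancel[of x w] by (auto simp: grades_def)

lemma gadd_self: "gadd x x = replicate (length x) False"
  by (rule nth_equalityI) (auto simp: gadd_def)

lemma gadd_zero_left: "x \<in> grades n \<Longrightarrow> gadd (replicate n False) x = x"
  by (rule nth_equalityI) (auto simp: gadd_def grades_def)

lemma octf_zero_left: "p \<le> n \<Longrightarrow> octf p n (replicate n False) y = 0"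
  by (simp add: octf_def)

lemma octf_zero_right: "p \<le> n \<Longrightarrow> octf p n x (replicate n False) = 0"
  by (simp add: octf_def)

lemma omult_apply:
  assumes w: "w \<in> grades (p+q)"
  shows "omult p q a b w =
    (\<Sum>x\<in>grades (p+q). (-1) ^ octf p (p+q) x (gadd x w) * a x * b (gadd x w))"
  unfolding omult_def
proof (rule sum.cong[OF refl])
  fix x assume x: "x \<in> grades (p+q)"
  have "(\<Sum>y\<in>grades (p+q). if gadd x y = w then (-1) ^ octf p (p+q) x y * a x * b y else 0)
      = (\<Sum>y\<in>grades (p+q). if gadd x w = y then (-1) ^ octf p (p+q) x y * a x * b y else 0)"
    by (rule sum.cong[OF refl]) (use gadd_eq_iff[OF x _ w] in auto)
  also have "\<dots> = (-1) ^ octf p (p+q) x (gadd x w) * a x * b (gadd x w)"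
    using gadd_in_grades[OF x w] by (simp add: finite_grades)
  finally show "(\<Sum>y\<in>grades (p+q). if gadd x y = w then (-1) ^ octf p (p+q) x y * a x * b y else 0)
      = (-1) ^ octf p (p+q) x (gadd x w) * a x * b (gadd x w)" .
qed

lemma omult_outside: "w \<notin> grades (p+q) \<Longrightarrow> omult p q a b w = 0"
  unfolding omult_def by (auto intro!: sum.neutral dest: gadd_in_grades)

lemma omult_in_ocarrier: "omult p q a b \<in> ocarrier p q"
  by (simp add: ocarrier_def omult_outside)

lemma ubasis_in_ocarrier: "x \<in> grades (p+q) \<Longrightarrow> ubasis x \<in> ocarrier p q"
  by (auto simp: ocarrier_def ubasis_def)

lemma omult_ubasis_left:
  assumes "x \<in> grades (p+q)" "w \<in> grades (p+q)"
  shows "omult p q (ubasis x) b w = (-1) ^ octf p (p+q) x (gadd x w) * b (gadd x w)"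
proof -
  have "omult p q (ubasis x) b w = (\<Sum>x'\<in>grades (p+q).
      if x' = x then (-1) ^ octf p (p+q) x (gadd x w) * b (gadd x w) else 0)"
    using assms(2) by (auto simp: omult_apply ubasis_def intro: sum.cong)
  then show ?thesis using assms(1) by (simp add: finite_grades)
qed

lemma omult_ubasis_right:
  assumes y: "y \<in> grades (p+q)" and w: "w \<in> grades (p+q)"
  shows "omult p q a (ubasis y) w = (-1) ^ octf p (p+q) (gadd y w) y * a (gadd y w)"
proof -
  have cancel: "gadd (gadd y w) w = y"
    using y w gadd_gadd_cancel[of w y] by (simp add: gadd_commute grades_def)
  have "omult p q a (ubasis y) w = (\<Sum>x\<in>grades (p+q).
      if x = gadd y w then (-1) ^ octf p (p+q) (gadd y w) y * a (gadd y w) else 0)"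
    unfolding omult_apply[OF w]
  proof (rule sum.cong[OF refl])
    fix x assume x: "x \<in> grades (p+q)"
    have "gadd x w = y \<longleftrightarrow> x = gadd y w"
      using gadd_eq_iff[OF w x y] by (simp add: gadd_commute)
    then show "(-1) ^ octf p (p+q) x (gadd x w) * a x * ubasis y (gadd x w) =
        (if x = gadd y w then (-1) ^ octf p (p+q) (gadd y w) y * a (gadd y w) else 0)"
      using cancel by (auto simp: ubasis_def)
  qed
  then show ?thesis using gadd_in_grades[OF y w] by (simp add: finite_grades)
qed

lemma omult_ubasis:
  assumes x: "x \<in> grades (p+q)" and y: "y \<in> grades (p+q)"
  shows "omult p q (ubasis x) (ubasis y) = (\<lambda>z. (-1) ^ octf p (p+q) x y * ubasis (gadd x y) z)"
proof
  fix w
  show "omult p q (ubasis x) (ubasis y) w = (-1) ^ octf p (p+q) x y * ubasis (gadd x y) w"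
  proof (cases "w \<in> grades (p+q)")
    case True
    then have "gadd x w = y \<longleftrightarrow> w = gadd x y" using gadd_eq_iff[OF x True y] by blast
    then show ?thesis
      using True by (simp only: omult_ubasis_left[OF x True]) (auto simp: ubasis_def)
  next
    case False
    then show ?thesis using gadd_in_grades[OF x y] by (auto simp: omult_outside ubasis_def)
  qed
qed

abbreviation ounit :: "nat \<Rightarrow> nat \<Rightarrow> bool list \<Rightarrow> real" where
  "ounit p q \<equiv> ubasis (replicate (p+q) False)"

lemma replicate_in_grades: "replicate n False \<in> grades n"
  by (simp add: grades_def)

lemma omult_unit_left:
  assumes "a \<in> ocarrier p q"
  shows "omult p q (ounit p q) a = a"
proof
  fix w show "omult p q (ounit p q) a w = a w"
    using assms
    by (cases "w \<in> grades (p+q)")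
       (simp_all add: omult_ubasis_left replicate_in_grades octf_zero_left gadd_zero_left
         omult_outside ocarrier_def)
qed

lemma omult_unit_right:
  assumes "a \<in> ocarrier p q"
  shows "omult p q a (ounit p q) = a"
proof
  fix w show "omult p q a (ounit p q) w = a w"
    using assms
    by (cases "w \<in> grades (p+q)")
       (simp_all add: omult_ubasis_right replicate_in_grades octf_zero_right gadd_zero_left
         omult_outside ocarrier_def)
qed

lemma omult_ubasis_self:
  assumes "x \<in> grades (p+q)" "even (octf p (p+q) x x)"
  shows "omult p q (ubasis x) (ubasis x) = ounit p q"
  using assms by (simp add: omult_ubasis gadd_self grades_def)

lemma not_graded_isomorphic_if_square_root_of_unit:
  assumes trivial_roots: "\<And>a. a \<in> ocarrier p q \<Longrightarrow> omult p q a a = ounit p q \<Longrightarrow>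
      a = ounit p q \<or> a = (\<lambda>z. - ounit p q z)"
    and y: "y \<in> grades (p'+q')" "y \<noteq> replicate (p'+q') False"
    and root: "omult p' q' (ubasis y) (ubasis y) = ounit p' q'"
  shows "\<not> graded_isomorphic p q p' q'"
proof
  assume "graded_isomorphic p q p' q'"
  then obtain \<phi> where "graded_iso_map p q p' q' \<phi>"
    unfolding graded_isomorphic_def by blast
  then have bij: "bij_betw \<phi> (ocarrier p q) (ocarrier p' q')"
    and scale: "\<And>a c. a \<in> ocarrier p q \<Longrightarrow> \<phi> (\<lambda>z. c * a z) = (\<lambda>z. c * \<phi> a z)"
    and mult: "\<And>a b. a \<in> ocarrier p q \<Longrightarrow> b \<in> ocarrier p q \<Longrightarrow>
        \<phi> (omult p q a b) = omult p' q' (\<phi> a) (\<phi> b)"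
    unfolding graded_iso_map_def by blast+
  have unit: "ounit p q \<in> ocarrier p q" "ounit p' q' \<in> ocarrier p' q'"
    by (simp_all add: ubasis_in_ocarrier replicate_in_grades)
  obtain a where a: "a \<in> ocarrier p q" "\<phi> a = ounit p' q'"
    using bij unit(2) by (metis bij_betw_iff_bijections)
  have "\<phi> (ounit p q) = omult p' q' (\<phi> (ounit p q)) (\<phi> a)"
    using a(2) omult_unit_right[OF bij_betw_apply[OF bij unit(1)]] by simp
  also have "\<dots> = \<phi> a"
    using mult[OF unit(1) a(1)] omult_unit_left[OF a(1)] by simp
  finally have phi_unit: "\<phi> (ounit p q) = ounit p' q'"
    using a(2) by simp
  obtain b where b: "b \<in> ocarrier p q" "\<phi> b = ubasis y"
    using bij ubasis_in_ocarrier[OF y(1)] by (metis bij_betw_iff_bijections)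
  have "\<phi> (omult p q b b) = \<phi> (ounit p q)"
    using mult[OF b(1) b(1)] b(2) root phi_unit by simp
  then have "omult p q b b = ounit p q"
    using bij omult_in_ocarrier unit(1) unfolding bij_betw_def inj_on_def by blast
  then have "b = ounit p q \<or> b = (\<lambda>z. -1 * ounit p q z)"
    using trivial_roots[OF b(1)] by simp
  then have "ubasis y = ounit p' q' \<or> ubasis y = (\<lambda>z. -1 * ounit p' q' z)"
    using b(2) phi_unit scale[OF unit(1), of "-1"] by auto
  then have "ubasis y y = ounit p' q' y \<or> ubasis y y = -1 * ounit p' q' y"
    by metis
  then show False
    using y(2) by (auto simp: ubasis_def)
qed

definition relabel :: "nat \<Rightarrow> (bool list \<Rightarrow> bool list) \<Rightarrow> (bool list \<Rightarrow> real) \<Rightarrow>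
    (bool list \<Rightarrow> real) \<Rightarrow> (bool list \<Rightarrow> real)" where
  "relabel n \<tau> s a = (\<lambda>z. if z \<in> grades n then s z * a (\<tau> z) else 0)"

lemma ocarrier_eq: "p + q = n \<Longrightarrow> ocarrier p q = {a. \<forall>z. z \<notin> grades n \<longrightarrow> a z = 0}"
  by (simp add: ocarrier_def)

lemma bij_betw_relabel:
  assumes n: "p + q = n" "p' + q' = n"
    and \<tau>: "bij_betw \<tau> (grades n) (grades n)"
    and s: "\<And>z. z \<in> grades n \<Longrightarrow> s z * s z = 1"
  shows "bij_betw (relabel n \<tau> s) (ocarrier p q) (ocarrier p' q')"
proof (rule bij_betw_byWitness[where f' = "relabel n (inv_into (grades n) \<tau>) (s \<circ> inv_into (grades n) \<tau>)"])
  let ?\<rho> = "inv_into (grades n) \<tau>"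
  have \<rho>: "?\<rho> z \<in> grades n" "\<tau> (?\<rho> z) = z" if "z \<in> grades n" for z
    using \<tau> that by (auto simp: bij_betw_def inv_into_into f_inv_into_f)
  have \<tau>': "\<tau> z \<in> grades n" "?\<rho> (\<tau> z) = z" if "z \<in> grades n" for z
    using \<tau> that by (auto simp: bij_betw_def)
  show "\<forall>a\<in>ocarrier p q. relabel n ?\<rho> (s \<circ> ?\<rho>) (relabel n \<tau> s a) = a"
    using \<rho> s by (auto simp: relabel_def ocarrier_eq[OF n(1)] mult.assoc[symmetric])
  show "\<forall>a\<in>ocarrier p' q'. relabel n \<tau> s (relabel n ?\<rho> (s \<circ> ?\<rho>) a) = a"
    using \<tau>' s by (auto simp: relabel_def ocarrier_eq[OF n(2)] mult.assoc[symmetric])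
  show "relabel n \<tau> s ` ocarrier p q \<subseteq> ocarrier p' q'"
    "relabel n ?\<rho> (s \<circ> ?\<rho>) ` ocarrier p' q' \<subseteq> ocarrier p q"
    by (auto simp: relabel_def ocarrier_eq[OF n(1)] ocarrier_eq[OF n(2)])
qed

lemma relabel_omult:
  assumes n: "p + q = n" "p' + q' = n"
    and \<tau>: "bij_betw \<tau> (grades n) (grades n)"
    and s: "\<And>z. z \<in> grades n \<Longrightarrow> s z * s z = 1"
    and additive: "\<And>x y. x \<in> grades n \<Longrightarrow> y \<in> grades n \<Longrightarrow> \<tau> (gadd x y) = gadd (\<tau> x) (\<tau> y)"
    and twist: "\<And>x y. x \<in> grades n \<Longrightarrow> y \<in> grades n \<Longrightarrow>
        (-1) ^ octf p n (\<tau> x) (\<tau> y) * s (gadd x y) = (-1) ^ octf p' n x y * s x * s y"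
  shows "relabel n \<tau> s (omult p q a b) = omult p' q' (relabel n \<tau> s a) (relabel n \<tau> s b)"
proof
  fix w
  show "relabel n \<tau> s (omult p q a b) w = omult p' q' (relabel n \<tau> s a) (relabel n \<tau> s b) w"
  proof (cases "w \<in> grades n")
    case False
    then show ?thesis using n by (simp add: relabel_def omult_outside)
  next
    case w: True
    have \<tau>w: "\<tau> w \<in> grades n" using \<tau> w by (meson bij_betwE)
    have "relabel n \<tau> s (omult p q a b) w =
        s w * (\<Sum>x\<in>grades n. (-1) ^ octf p n x (gadd x (\<tau> w)) * a x * b (gadd x (\<tau> w)))"
      using w \<tau>w n by (simp add: relabel_def omult_apply)
    also have "\<dots> = s w * (\<Sum>x\<in>grades n.
        (-1) ^ octf p n (\<tau> x) (gadd (\<tau> x) (\<tau> w)) * a (\<tau> x) * b (gadd (\<tau> x) (\<tau> w)))"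
      by (subst sum.reindex_bij_betw[OF \<tau>, symmetric]) simp
    also have "\<dots> = (\<Sum>x\<in>grades n. ((-1) ^ octf p n (\<tau> x) (\<tau> (gadd x w)) * s (gadd x (gadd x w)))
        * a (\<tau> x) * b (\<tau> (gadd x w)))"
      unfolding sum_distrib_left
      by (rule sum.cong[OF refl]) (use w additive gadd_gadd_cancel in \<open>auto simp: grades_def\<close>)
    also have "\<dots> = (\<Sum>x\<in>grades n. ((-1) ^ octf p' n x (gadd x w) * s x * s (gadd x w))
        * a (\<tau> x) * b (\<tau> (gadd x w)))"
      by (rule sum.cong[OF refl]) (use w twist gadd_in_grades in auto)
    also have "\<dots> = omult p' q' (relabel n \<tau> s a) (relabel n \<tau> s b) w"
      using w n by (auto simp: omult_apply relabel_def gadd_in_grades intro!: sum.cong)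
    finally show ?thesis .
  qed
qed

lemma relabel_homogeneous:
  assumes n: "p + q = n" "p' + q' = n"
    and \<tau>: "bij_betw \<tau> (grades n) (grades n)"
    and "homogeneous p q a"
  shows "homogeneous p' q' (relabel n \<tau> s a)"
proof -
  obtain x c where x: "x \<in> grades n" and a: "a = (\<lambda>z. c * ubasis x z)"
    using assms(4) n(1) unfolding homogeneous_def by blast
  let ?x' = "inv_into (grades n) \<tau> x"
  have x': "?x' \<in> grades n" "\<tau> ?x' = x"
    using \<tau> x by (auto simp: bij_betw_def inv_into_into f_inv_into_f)
  have "relabel n \<tau> s a = (\<lambda>z. (s ?x' * c) * ubasis ?x' z)"
  proof
    fix z show "relabel n \<tau> s a z = (s ?x' * c) * ubasis ?x' z"
      using x' \<tau> by (auto simp: relabel_def a ubasis_def bij_betw_def inj_on_def)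
  qed
  then show ?thesis
    using x' n(2) unfolding homogeneous_def by blast
qed

lemma graded_iso_map_relabel:
  assumes n: "p + q = n" "p' + q' = n"
    and \<tau>: "bij_betw \<tau> (grades n) (grades n)"
    and s: "\<And>z. z \<in> grades n \<Longrightarrow> s z * s z = 1"
    and additive: "\<And>x y. x \<in> grades n \<Longrightarrow> y \<in> grades n \<Longrightarrow> \<tau> (gadd x y) = gadd (\<tau> x) (\<tau> y)"
    and twist: "\<And>x y. x \<in> grades n \<Longrightarrow> y \<in> grades n \<Longrightarrow>
        (-1) ^ octf p n (\<tau> x) (\<tau> y) * s (gadd x y) = (-1) ^ octf p' n x y * s x * s y"
  shows "graded_iso_map p q p' q' (relabel n \<tau> s)"
  unfolding graded_iso_map_def
  using bij_betw_relabel[OF n \<tau> s] relabel_omult[OF n \<tau> s additive twist]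
    relabel_homogeneous[OF n \<tau>]
  by (auto simp: relabel_def fun_eq_iff distrib_left)

lemma graded_isomorphic_relabel:
  fixes s :: "bool list \<Rightarrow> real"
  assumes n: "p + q = n" "p' + q' = n"
    and \<tau>: "bij_betw \<tau> (grades n) (grades n)"
    and s: "\<forall>z\<in>grades n. s z * s z = 1"
    and additive: "\<forall>x\<in>grades n. \<forall>y\<in>grades n. \<tau> (gadd x y) = gadd (\<tau> x) (\<tau> y)"
    and twist: "\<forall>x\<in>grades n. \<forall>y\<in>grades n.
        (-1) ^ octf p n (\<tau> x) (\<tau> y) * s (gadd x y) = (-1) ^ octf p' n x y * s x * s y"
  shows "graded_isomorphic p q p' q'"
  unfolding graded_isomorphic_def
  using graded_iso_map_relabel[OF n \<tau>, of s] s additive twist by blast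

lemma grades_3: "grades 3 = {[False,False,False], [False,False,True], [False,True,False],
    [False,True,True], [True,False,False], [True,False,True], [True,True,False], [True,True,True]}"
proof -
  have "length x = 3 \<longleftrightarrow> (\<exists>a b c. x = [a,b,c])" for x :: "bool list"
    by (auto simp: numeral_3_eq_3 length_Suc_conv)
  then show ?thesis by (auto simp: grades_def)
qed

lemma ball_grades_3: "(\<forall>x\<in>grades 3. P x) \<longleftrightarrow>
    P [False,False,False] \<and> P [False,False,True] \<and> P [False,True,False] \<and> P [False,True,True] \<and>
    P [True,False,False] \<and> P [True,False,True] \<and> P [True,True,False] \<and> P [True,True,True]"
  by (simp add: grades_3)

lemma octf_3:
  assumes "p \<le> 3"
  shows "octf p 3 [a,b,c] [d,e,g] =
      of_bool (a \<and> b \<and> g) + of_bool (a \<and> e \<and> c) + of_bool (d \<and> b \<and> c)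
    + (of_bool (a \<and> d) + of_bool (a \<and> e) + of_bool (a \<and> g) + of_bool (b \<and> e)
       + of_bool (b \<and> g) + of_bool (c \<and> g))
    + (of_bool (0 < p \<and> a \<and> d) + of_bool (1 < p \<and> b \<and> e) + of_bool (2 < p \<and> c \<and> g))"
proof -
  have "p = 0 \<or> p = 1 \<or> p = 2 \<or> p = 3" using assms by auto
  then show ?thesis
    by (elim disjE) (simp_all add: octf_def numeral_3_eq_3 numeral_2_eq_2 lessThan_Suc)
qed

lemma replicate_3: "replicate 3 False = [False,False,False]"
  by (simp add: numeral_3_eq_3)

text \<open>Witnesses for the two isomorphisms: \<tau> is linear, and \<sigma> is the sign function whose
  coboundary accounts for the difference between the twisting functions.\<close>

definition \<tau>\<^sub>3\<^sub>0 :: "bool list \<Rightarrow> bool list" where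
  "\<tau>\<^sub>3\<^sub>0 x = [x!2, x!1, x!0 \<noteq> x!2]"

definition \<sigma>\<^sub>3\<^sub>0 :: "bool list \<Rightarrow> real" where
  "\<sigma>\<^sub>3\<^sub>0 x = (if x = [True,False,True] \<or> x = [True,True,False] then -1 else 1)"

definition \<tau>\<^sub>2\<^sub>1 :: "bool list \<Rightarrow> bool list" where
  "\<tau>\<^sub>2\<^sub>1 x = [x!2, x!0 \<noteq> x!2, x!1]"

definition \<sigma>\<^sub>2\<^sub>1 :: "bool list \<Rightarrow> real" where
  "\<sigma>\<^sub>2\<^sub>1 x = (if x = [False,True,True] \<or> x = [True,False,True] then -1 else 1)"

lemma graded_isomorphic_30_21: "graded_isomorphic 3 0 2 1"
proof (rule graded_isomorphic_relabel[where n = 3 and \<tau> = \<tau>\<^sub>3\<^sub>0 and s = \<sigma>\<^sub>3\<^sub>0])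
  show "bij_betw \<tau>\<^sub>3\<^sub>0 (grades 3) (grades 3)"
    by (rule bij_betw_byWitness[where f' = "\<lambda>x. [x!2 \<noteq> x!0, x!1, x!0]"])
       (simp_all add: grades_3 \<tau>\<^sub>3\<^sub>0_def)
  show "\<forall>z\<in>grades 3. \<sigma>\<^sub>3\<^sub>0 z * \<sigma>\<^sub>3\<^sub>0 z = 1"
    by (simp add: \<sigma>\<^sub>3\<^sub>0_def)
  show "\<forall>x\<in>grades 3. \<forall>y\<in>grades 3. \<tau>\<^sub>3\<^sub>0 (gadd x y) = gadd (\<tau>\<^sub>3\<^sub>0 x) (\<tau>\<^sub>3\<^sub>0 y)"
    unfolding ball_grades_3 by (simp add: \<tau>\<^sub>3\<^sub>0_def gadd_def)
  show "\<forall>x\<in>grades 3. \<forall>y\<in>grades 3. (-1) ^ octf 3 3 (\<tau>\<^sub>3\<^sub>0 x) (\<tau>\<^sub>3\<^sub>0 y) * \<sigma>\<^sub>3\<^sub>0 (gadd x y)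
      = (-1) ^ octf 2 3 x y * \<sigma>\<^sub>3\<^sub>0 x * \<sigma>\<^sub>3\<^sub>0 y"
    unfolding ball_grades_3 by (simp add: \<tau>\<^sub>3\<^sub>0_def \<sigma>\<^sub>3\<^sub>0_def gadd_def octf_3)
qed simp_all

lemma graded_isomorphic_21_12: "graded_isomorphic 2 1 1 2"
proof (rule graded_isomorphic_relabel[where n = 3 and \<tau> = \<tau>\<^sub>2\<^sub>1 and s = \<sigma>\<^sub>2\<^sub>1])
  show "bij_betw \<tau>\<^sub>2\<^sub>1 (grades 3) (grades 3)"
    by (rule bij_betw_byWitness[where f' = "\<lambda>x. [x!1 \<noteq> x!0, x!2, x!0]"])
       (simp_all add: grades_3 \<tau>\<^sub>2\<^sub>1_def)
  show "\<forall>z\<in>grades 3. \<sigma>\<^sub>2\<^sub>1 z * \<sigma>\<^sub>2\<^sub>1 z = 1"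
    by (simp add: \<sigma>\<^sub>2\<^sub>1_def)
  show "\<forall>x\<in>grades 3. \<forall>y\<in>grades 3. \<tau>\<^sub>2\<^sub>1 (gadd x y) = gadd (\<tau>\<^sub>2\<^sub>1 x) (\<tau>\<^sub>2\<^sub>1 y)"
    unfolding ball_grades_3 by (simp add: \<tau>\<^sub>2\<^sub>1_def gadd_def)
  show "\<forall>x\<in>grades 3. \<forall>y\<in>grades 3. (-1) ^ octf 2 3 (\<tau>\<^sub>2\<^sub>1 x) (\<tau>\<^sub>2\<^sub>1 y) * \<sigma>\<^sub>2\<^sub>1 (gadd x y)
      = (-1) ^ octf 1 3 x y * \<sigma>\<^sub>2\<^sub>1 x * \<sigma>\<^sub>2\<^sub>1 y"
    unfolding ball_grades_3 by (simp add: \<tau>\<^sub>2\<^sub>1_def \<sigma>\<^sub>2\<^sub>1_def gadd_def octf_3)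
qed simp_all

lemma square_root_of_unit_0_3:
  assumes a: "a \<in> ocarrier 0 3" and root: "omult 0 3 a a = ounit 0 3"
  shows "a = ounit 0 3 \<or> a = (\<lambda>z. - ounit 0 3 z)"
proof -
  let ?e = "[False,False,False]" and ?G' = "grades 3 - {[False,False,False]}"
  have "\<forall>w\<in>grades 3. (\<Sum>x\<in>grades 3. (-1) ^ octf 0 3 x (gadd x w) * a x * a (gadd x w))
      = ubasis ?e w"
    using root omult_apply[of _ 0 3 a a] by (simp add: replicate_3)
  \<comment> \<open>Every u_y with y \<noteq> 0 squares to -1, and distinct ones anticommute, so the coefficients
    of u_0 and of u_y in a^2 are a_0^2 - \<Sum> a_y^2 and 2 a_0 a_y.\<close>
  then have norm: "a ?e * a ?e - (\<Sum>y\<in>?G'. a y * a y) = 1"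
    and mixed: "\<forall>y\<in>?G'. a ?e * a y = 0"
    unfolding grades_3 by (simp_all add: gadd_def octf_3 ubasis_def algebra_simps) blast
  have "a ?e \<noteq> 0"
  proof
    assume "a ?e = 0"
    moreover have "0 \<le> (\<Sum>y\<in>?G'. a y * a y)" by (simp add: sum_nonneg)
    ultimately show False using norm by simp
  qed
  then have rest: "a z = 0" if "z \<noteq> ?e" for z
    using mixed a that by (cases "z \<in> grades 3") (auto simp: ocarrier_def)
  then have "a ?e * a ?e = 1"
    using norm by simp
  then have "a ?e = 1 \<or> a ?e = -1"
    by (simp add: square_eq_1_iff)
  then show ?thesis
    using rest by (auto simp: fun_eq_iff ubasis_def replicate_3)
qed

theorem mainTheorem4:
  shows "graded_isomorphic 3 0 2 1 \<and> graded_isomorphic 2 1 1 2 \<and>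
         \<not> graded_isomorphic 0 3 3 0 \<and> \<not> graded_isomorphic 0 3 2 1 \<and>
         \<not> graded_isomorphic 0 3 1 2"
proof (intro conjI)
  show "graded_isomorphic 3 0 2 1" by (rule graded_isomorphic_30_21)
  show "graded_isomorphic 2 1 1 2" by (rule graded_isomorphic_21_12)
  show "\<not> graded_isomorphic 0 3 3 0"
    by (rule not_graded_isomorphic_if_square_root_of_unit[OF square_root_of_unit_0_3
          _ _ omult_ubasis_self, of "[False,False,True]"])
       (simp_all add: grades_3 replicate_3 octf_3)
  show "\<not> graded_isomorphic 0 3 2 1"
    by (rule not_graded_isomorphic_if_square_root_of_unit[OF square_root_of_unit_0_3
          _ _ omult_ubasis_self, of "[False,True,False]"])
       (simp_all add: grades_3 replicate_3 octf_3)
  show "\<not> graded_isomorphic 0 3 1 2"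
    by (rule not_graded_isomorphic_if_square_root_of_unit[OF square_root_of_unit_0_3
          _ _ omult_ubasis_self, of "[True,False,False]"])
       (simp_all add: grades_3 replicate_3 octf_3 del: One_nat_def)
qed

end
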